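(* Every connected graph $G$ with at least $2$ vertices has a connecting transition set of size $|V(G)|-2$.
   Context: All graphs are finite, simple and undirected. A transition of a graph $G$ is an unordered pair $\{ab,bc\}$ of two distinct edges of $G$ sharing the vertex $b$ (so $a\neq c$); it is written $abc$. A walk in $G$ is a sequence $(v_1,\dots,v_k)$ of vertices with $v_iv_{i+1}\in E(G)$ for all $i\le k-1$; it leads from $v_1$ to $v_k$. For a set $T$ of transitions of $G$, a walk $(v_1,\dots,v_k)$ is $T$-compatible if for every $i\in[1,k-2]$, either $v_i=v_{i+2}$ or $v_iv_{i+1}v_{i+2}\in T$. The graph $G$ is $T$-connected, and $T$ is a connecting transition set of $G$, if for all vertices $u,v$ of $G$ there is a $T$-compatible walk leading from $u$ to $v$. *)

theory Defs
  imports Main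
begin

definition simple_graph :: "'a set \<Rightarrow> 'a set set \<Rightarrow> bool" where
  "simple_graph V E \<longleftrightarrow> finite V \<and>
     (\<forall>e\<in>E. \<exists>u v. e = {u, v} \<and> u \<noteq> v \<and> u \<in> V \<and> v \<in> V)"

definition transitions :: "'a set \<Rightarrow> 'a set set \<Rightarrow> 'a set set set" where
  "transitions V E = {{{a, b}, {b, c}} | a b c. {a, b} \<in> E \<and> {b, c} \<in> E \<and> a \<noteq> c}"

definition is_walk :: "'a set \<Rightarrow> 'a set set \<Rightarrow> 'a list \<Rightarrow> bool" where
  "is_walk V E vs \<longleftrightarrow> vs \<noteq> [] \<and> set vs \<subseteq> V \<and>
     (\<forall>i. Suc i < length vs \<longrightarrow> {vs ! i, vs ! Suc i} \<in> E)"

definition walk_from_to :: "'a set \<Rightarrow> 'a set set \<Rightarrow> 'a list \<Rightarrow> 'a \<Rightarrow> 'a \<Rightarrow> bool" where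
  "walk_from_to V E vs u v \<longleftrightarrow> is_walk V E vs \<and> hd vs = u \<and> last vs = v"

definition T_compatible :: "'a set set set \<Rightarrow> 'a list \<Rightarrow> bool" where
  "T_compatible T vs \<longleftrightarrow>
     (\<forall>i. i + 2 < length vs \<longrightarrow>
        vs ! i = vs ! (i + 2) \<or> {{vs ! i, vs ! (i + 1)}, {vs ! (i + 1), vs ! (i + 2)}} \<in> T)"

definition T_connected :: "'a set \<Rightarrow> 'a set set \<Rightarrow> 'a set set set \<Rightarrow> bool" where
  "T_connected V E T \<longleftrightarrow>
     (\<forall>u\<in>V. \<forall>v\<in>V. \<exists>vs. walk_from_to V E vs u v \<and> T_compatible T vs)"

definition connecting_transition_set :: "'a set \<Rightarrow> 'a set set \<Rightarrow> 'a set set set \<Rightarrow> bool" where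
  "connecting_transition_set V E T \<longleftrightarrow> T \<subseteq> transitions V E \<and> T_connected V E T"

definition graph_connected :: "'a set \<Rightarrow> 'a set set \<Rightarrow> bool" where
  "graph_connected V E \<longleftrightarrow> (\<forall>u\<in>V. \<forall>v\<in>V. \<exists>vs. walk_from_to V E vs u v)"

end

theory Submission imports Defs begin

text \<open>Fix an edge \<open>pq\<close> and grow a vertex set \<open>S\<close> from \<open>{p, q}\<close>, keeping the invariant that every
  vertex of \<open>S\<close> is the end of a \<open>T\<close>-compatible walk inside \<open>S\<close> that starts with the arc \<open>p \<rightarrow> q\<close>.
  To add a neighbour \<open>v\<close> of some \<open>u \<in> S\<close>, extend the walk ending at \<open>u\<close>, whose last edge is \<open>au\<close>,
  by \<open>uv\<close> and add the single transition \<open>auv\<close>; so \<open>|T| = |S| - 2\<close> throughout. Once \<open>S = V\<close>,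
  any two vertices are joined by walking the first walk backwards and then the second one
  forwards: the turn \<open>q p q\<close> in the middle is a reversal and needs no transition.\<close>

lemma T_compatible_short [simp]: "length vs \<le> 2 \<Longrightarrow> T_compatible T vs"
  by (simp add: T_compatible_def)

lemma T_compatible_Cons3 [simp]:
  "T_compatible T (a # b # c # vs) \<longleftrightarrow>
     (a = c \<or> {{a, b}, {b, c}} \<in> T) \<and> T_compatible T (b # c # vs)"
  unfolding T_compatible_def by (simp add: All_less_Suc2)

lemma T_compatible_mono: "T_compatible T vs \<Longrightarrow> T \<subseteq> T' \<Longrightarrow> T_compatible T' vs"
  by (auto simp: T_compatible_def)

lemma T_compatible_append_overlap:
  "T_compatible T (xs @ a # b # ys) \<longleftrightarrow> T_compatible T (xs @ [a, b]) \<and> T_compatible T (a # b # ys)"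
proof (induction xs rule: induct_list012)
  case (3 x y zs)
  then show ?case by (cases zs) auto
qed auto

lemma T_compatible_rev [simp]: "T_compatible T (rev vs) \<longleftrightarrow> T_compatible T vs"
proof (induction vs rule: induct_list012)
  case (3 x y zs)
  show ?case
  proof (cases zs)
    case (Cons z zs')
    have "T_compatible T (rev (x # y # zs)) \<longleftrightarrow> T_compatible T (rev zs' @ z # y # [x])"
      using Cons by simp
    also have "\<dots> \<longleftrightarrow> T_compatible T (rev zs' @ [z, y]) \<and> T_compatible T [z, y, x]"
      by (rule T_compatible_append_overlap)
    also have "rev zs' @ [z, y] = rev (y # zs)"
      using Cons by simp
    finally show ?thesis using 3 Cons by (auto simp: insert_commute)
  qed simp
qed auto

lemma list_ends_with_two: "2 \<le> length vs \<Longrightarrow> \<exists>xs a b. vs = xs @ [a, b]"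
  by (cases vs rule: rev_cases; cases "butlast vs" rule: rev_cases) auto

lemma is_walk_iff_successively:
  "is_walk V E vs \<longleftrightarrow> vs \<noteq> [] \<and> set vs \<subseteq> V \<and> successively (\<lambda>a b. {a, b} \<in> E) vs"
  by (simp add: is_walk_def successively_conv_nth)

lemma is_walk_mono: "is_walk S E vs \<Longrightarrow> S \<subseteq> S' \<Longrightarrow> is_walk S' E vs"
  by (auto simp: is_walk_def)

lemma is_walk_rev:
  assumes "is_walk V E vs"
  shows "is_walk V E (rev vs)"
proof -
  have sym: "(\<lambda>a b. {b, a} \<in> E) = (\<lambda>a b. {a, b} \<in> E)" by (simp add: insert_commute)
  show ?thesis
    using assms unfolding is_walk_iff_successively successively_rev sym by simp
qed

lemma is_walk_append_overlap:
  assumes "is_walk V E xs" "is_walk V E (y # ys)" "last xs = y"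
  shows "is_walk V E (xs @ ys)"
  using assms unfolding is_walk_iff_successively
  by (cases ys) (auto simp: successively_append_iff)

lemma successively_crossing:
  "successively P vs \<Longrightarrow> vs \<noteq> [] \<Longrightarrow> hd vs \<in> S \<Longrightarrow> last vs \<notin> S \<Longrightarrow>
     \<exists>a b. a \<in> S \<and> b \<notin> S \<and> b \<in> set vs \<and> P a b"
proof (induction vs rule: induct_list012)
  case (3 x y zs)
  then show ?case by (cases "y \<in> S") auto
qed auto

lemma graph_connected_edge_leaving:
  assumes "graph_connected V E" "S \<subseteq> V" "s \<in> S" "x \<in> V - S"
  shows "\<exists>u v. u \<in> S \<and> v \<in> V - S \<and> {u, v} \<in> E"
proof -
  obtain vs where "walk_from_to V E vs s x"
    using assms unfolding graph_connected_def by blast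
  then have "successively (\<lambda>a b. {a, b} \<in> E) vs" "vs \<noteq> []" "hd vs \<in> S" "last vs \<notin> S" "set vs \<subseteq> V"
    using assms by (auto simp: walk_from_to_def is_walk_iff_successively)
  then show ?thesis using successively_crossing[of "\<lambda>a b. {a, b} \<in> E" vs S] by blast
qed

definition T_rooted :: "'a set set \<Rightarrow> 'a set set set \<Rightarrow> 'a set \<Rightarrow> 'a \<Rightarrow> 'a \<Rightarrow> bool" where
  "T_rooted E T S p q \<longleftrightarrow>
     (\<forall>x\<in>S. \<exists>ws. is_walk S E (p # q # ws) \<and> T_compatible T (p # q # ws) \<and> last (p # q # ws) = x)"

lemma T_rooted_edge:
  assumes "{p, q} \<in> E"
  shows "T_rooted E T {p, q} p q"
  unfolding T_rooted_def
proof
  fix x assume "x \<in> {p, q}"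
  then consider "x = p" | "x = q" by blast
  then show "\<exists>ws. is_walk {p, q} E (p # q # ws) \<and> T_compatible T (p # q # ws) \<and> last (p # q # ws) = x"
  proof cases
    case 1
    have "is_walk {p, q} E [p, q, p]"
      using assms by (simp add: is_walk_iff_successively insert_commute)
    then show ?thesis using 1 by (intro exI[of _ "[p]"]) simp
  next
    case 2
    have "is_walk {p, q} E [p, q]"
      using assms by (simp add: is_walk_iff_successively)
    then show ?thesis using 2 by (intro exI[of _ "[]"]) simp
  qed
qed

lemma T_rooted_extend:
  assumes rooted: "T_rooted E T S p q" and "u \<in> S" "v \<notin> S" "{u, v} \<in> E"
  shows "\<exists>a\<in>S. {a, u} \<in> E \<and> T_rooted E (insert {{a, u}, {u, v}} T) (insert v S) p q"
proof -
  obtain ws where ws: "is_walk S E (p # q # ws)" "T_compatible T (p # q # ws)" "last (p # q # ws) = u"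
    using rooted \<open>u \<in> S\<close> unfolding T_rooted_def by blast
  obtain xs a b where "p # q # ws = xs @ [a, b]"
    using list_ends_with_two[of "p # q # ws"] by auto
  with ws(3) have split: "p # q # ws = xs @ [a, u]" by simp
  have "a \<in> S" "{a, u} \<in> E"
    using ws(1) unfolding split is_walk_iff_successively by (auto simp: successively_append_iff)
  define T' where "T' = insert {{a, u}, {u, v}} T"
  have "T_rooted E T' (insert v S) p q"
    unfolding T_rooted_def
  proof
    fix x assume "x \<in> insert v S"
    show "\<exists>ws. is_walk (insert v S) E (p # q # ws) \<and> T_compatible T' (p # q # ws) \<and> last (p # q # ws) = x"
    proof (cases "x = v")
      case True
      have "is_walk (insert v S) E [u, v]"
        using \<open>u \<in> S\<close> \<open>{u, v} \<in> E\<close> by (simp add: is_walk_iff_successively)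
      then have "is_walk (insert v S) E (p # q # ws @ [v])"
        using is_walk_append_overlap[OF is_walk_mono[OF ws(1) subset_insertI]] ws(3) by simp
      moreover have "T_compatible T' (p # q # ws @ [v])"
      proof -
        have "p # q # ws @ [v] = xs @ [a, u, v]"
          using arg_cong[OF split, of "\<lambda>l. l @ [v]"] by simp
        then show ?thesis
          using T_compatible_mono[OF ws(2)] unfolding split T'_def
          by (simp only:) (subst T_compatible_append_overlap, auto)
      qed
      ultimately show ?thesis
        using True by (intro exI[of _ "ws @ [v]"]) simp
    next
      case False
      then obtain ws' where "is_walk S E (p # q # ws')" "T_compatible T (p # q # ws')" "last (p # q # ws') = x"
        using rooted \<open>x \<in> insert v S\<close> unfolding T_rooted_def by blast
      then show ?thesis
        using is_walk_mono[of S E _ "insert v S"] T_compatible_mono[of T _ T'] unfolding T'_def by blast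
    qed
  qed
  then show ?thesis using \<open>a \<in> S\<close> \<open>{a, u} \<in> E\<close> unfolding T'_def by blast
qed

lemma T_rooted_imp_T_connected:
  assumes "T_rooted E T V p q"
  shows "T_connected V E T"
  unfolding T_connected_def
proof (intro ballI)
  fix x y assume "x \<in> V" "y \<in> V"
  obtain A where A: "is_walk V E (p # q # A)" "T_compatible T (p # q # A)" "last (p # q # A) = x"
    using assms \<open>x \<in> V\<close> unfolding T_rooted_def by blast
  obtain B where B: "is_walk V E (p # q # B)" "T_compatible T (p # q # B)" "last (p # q # B) = y"
    using assms \<open>y \<in> V\<close> unfolding T_rooted_def by blast
  define vs where "vs = rev (p # q # A) @ q # B"
  have "is_walk V E vs"
    unfolding vs_def using is_walk_append_overlap[OF is_walk_rev[OF A(1)] B(1)] by simp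
  moreover have "hd vs = x" "last vs = y"
    using A(3) B(3) unfolding vs_def by (auto simp: hd_append hd_rev)
  moreover have "T_compatible T vs"
  proof -
    have "vs = rev A @ q # p # q # B" unfolding vs_def by simp
    moreover have "T_compatible T (rev A @ [q, p])"
      using A(2) T_compatible_rev[of T "p # q # A"] by simp
    ultimately show ?thesis
      using B(2) T_compatible_append_overlap[of T "rev A" q p "q # B"] by simp
  qed
  ultimately show "\<exists>vs. walk_from_to V E vs x y \<and> T_compatible T vs"
    unfolding walk_from_to_def by blast
qed

lemma ex_rooted_transition_set:
  assumes conn: "graph_connected V E" and "finite V" "2 \<le> k" "k \<le> card V"
  shows "\<exists>S T p q. S \<subseteq> V \<and> card S = k \<and> finite T \<and> card T = k - 2 \<and>
           T \<subseteq> transitions V E \<and> \<Union>(\<Union>T) \<subseteq> S \<and> T_rooted E T S p q"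
  using \<open>2 \<le> k\<close> \<open>k \<le> card V\<close>
proof (induction k rule: nat_induct_at_least)
  case base
  then have "V \<noteq> {}" by auto
  then obtain x where "x \<in> V" by blast
  have "\<not> V \<subseteq> {x}"
  proof
    assume "V \<subseteq> {x}"
    then have "card V \<le> 1" using card_mono[of "{x}" V] by simp
    then show False using base by simp
  qed
  then obtain v where v: "v \<in> V - {x}" "{x, v} \<in> E"
    using graph_connected_edge_leaving[OF conn, of "{x}"] \<open>x \<in> V\<close> by blast
  have "{x, v} \<subseteq> V \<and> card {x, v} = 2 \<and> finite {} \<and> card {} = 2 - 2 \<and>
      {} \<subseteq> transitions V E \<and> \<Union>(\<Union>{}) \<subseteq> {x, v} \<and> T_rooted E {} {x, v} x v"
    using \<open>x \<in> V\<close> v T_rooted_edge[OF v(2)] by auto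
  then show ?case by blast
next
  case (Suc n)
  then obtain S T p q where S: "S \<subseteq> V" "card S = n" and T: "finite T" "card T = n - 2"
      "T \<subseteq> transitions V E" "\<Union>(\<Union>T) \<subseteq> S" and rooted: "T_rooted E T S p q"
    by auto
  have "S \<noteq> V" using S Suc.prems by auto
  moreover have "S \<noteq> {}" using S Suc.hyps by auto
  ultimately obtain u v where uv: "u \<in> S" "v \<in> V - S" "{u, v} \<in> E"
    using graph_connected_edge_leaving[OF conn \<open>S \<subseteq> V\<close>] S(1) by blast
  then obtain a where a: "a \<in> S" "{a, u} \<in> E"
    and rooted': "T_rooted E (insert {{a, u}, {u, v}} T) (insert v S) p q"
    using T_rooted_extend[OF rooted] by blast
  \<comment> \<open>\<open>t\<close> is new because it uses the vertex \<open>v \<notin> S\<close>; this is what the invariant \<open>\<Union>(\<Union>T) \<subseteq> S\<close> is for.\<close>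
  define t where "t = {{a, u}, {u, v}}"
  have vertices_t: "\<Union>t = {a, u, v}" unfolding t_def by auto
  have "t \<in> transitions V E"
    unfolding transitions_def t_def using a uv
    by (intro CollectI exI[of _ a] exI[of _ u] exI[of _ v]) auto
  moreover have "t \<notin> T"
  proof
    assume "t \<in> T"
    then have "\<Union>t \<subseteq> S" using T(4) by blast
    then show False using vertices_t uv(2) by simp
  qed
  ultimately have "card (insert t T) = Suc n - 2" "insert t T \<subseteq> transitions V E"
    using T(1-3) Suc.hyps by simp_all
  moreover have "\<Union>(\<Union>(insert t T)) \<subseteq> insert v S"
    using T(4) a(1) uv(1) vertices_t by auto
  moreover have "insert v S \<subseteq> V" "card (insert v S) = Suc n"
    using S finite_subset[OF S(1) \<open>finite V\<close>] uv(2) by auto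
  moreover have "finite (insert t T)" using T(1) by simp
  ultimately have grown: "insert v S \<subseteq> V \<and> card (insert v S) = Suc n \<and> finite (insert t T) \<and>
      card (insert t T) = Suc n - 2 \<and> insert t T \<subseteq> transitions V E \<and>
      \<Union>(\<Union>(insert t T)) \<subseteq> insert v S \<and> T_rooted E (insert t T) (insert v S) p q"
    using rooted' unfolding t_def[symmetric] by (intro conjI)
  show ?case by (rule exI)+ (fact grown)
qed

theorem corollary2:
  fixes V :: "'a set" and E :: "'a set set"
  assumes "simple_graph V E" and "graph_connected V E" and "card V \<ge> 2"
  shows "\<exists>T. connecting_transition_set V E T \<and> card T = card V - 2"
proof -
  have "finite V" using assms(1) by (simp add: simple_graph_def)
  obtain S T p q where "S \<subseteq> V" "card S = card V" "card T = card V - 2"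
      "T \<subseteq> transitions V E" "T_rooted E T S p q"
    using ex_rooted_transition_set[OF assms(2) \<open>finite V\<close> assms(3) order.refl] by blast
  moreover from calculation have "S = V" using \<open>finite V\<close> by (simp add: card_subset_eq)
  ultimately have "T \<subseteq> transitions V E \<and> T_connected V E T \<and> card T = card V - 2"
    using T_rooted_imp_T_connected by simp
  then show ?thesis unfolding connecting_transition_set_def by blast
qed

end
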